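(* Let $T$ be a TCD map on a BTB graph $G$, and let $\tilde T$ be obtained from $T$ by a resplit at $w_0$, with notation $w_0,w_1,w_2,w_3,w_4,\tilde w_0$ as in the context. Then $$\mathrm{mr}\bigl(T(w_1),T(w_0),T(w_2),T(w_3),\tilde T(\tilde w_0),T(w_4)\bigr)=-1.$$
   Context: A BTB graph is a planar bipartite graph (black $B$, white $W$) in a disk or cactus with all black vertices of degree $3$. A TCD map is $T:W\to\mathbb{CP}^d$ such that the neighbours of each black vertex have pairwise distinct collinear images. Resplit. Let $w_0$ be an internal white vertex of degree $2$ with black neighbours $b$ (other neighbours $w_1,w_2$) and $b'$ (other neighbours $w_3,w_4$), labelled so that $w_1,w_4$ lie on one face containing $b,w_0,b'$ and $w_2,w_3$ on the other. The resplit replaces $w_0,b,b'$ by a white vertex $\tilde w_0$ and black vertices adjacent to $\{\tilde w_0,w_1,w_4\}$ and $\{\tilde w_0,w_2,w_3\}$. Choose lifts $V(w)$ of the points and write the collinearity relations as $V(w_0)=\alpha_1V(w_1)+\alpha_2V(w_2)=\alpha_3V(w_3)+\alpha_4V(w_4)$. Then $\tilde T(\tilde w_0)=[\alpha_1V(w_1)-\alpha_4V(w_4)]=[\alpha_3V(w_3)-\alpha_2V(w_2)]$, and all other points are unchanged. The move is assumed defined, i.e. $T(w_1)\ne T(w_4)$ and $T(w_2)\ne T(w_3)$. Multi-ratio: for points $P_1,P_{1,2},P_2,P_{2,3},P_3,P_{3,1}$ with $P_{i,i+1}$ on line $P_iP_{i+1}$, $\mathrm{mr}=\prod_{i=1}^3(P_i-P_{i,i+1})/(P_{i,i+1}-P_{i+1})$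 (indices mod $3$), computed in any affine chart containing all points. *)

theory Defs
  imports "HOL-Analysis.Analysis"
begin

text \<open>Points of CP^d are represented by nonzero lifts in complex^'n (with CARD('n) = d+1).
  Two nonzero lifts represent the same point iff they are proportional.\<close>
definition proj_eq :: "complex^'n \<Rightarrow> complex^'n \<Rightarrow> bool" where
  "proj_eq u v \<longleftrightarrow> (\<exists>c. c \<noteq> 0 \<and> u = c *s v)"

text \<open>An affine chart is given by a (complex-linear) functional, represented by a covector a;
  the chart is the affine hyperplane a.V = 1, which contains the point [V] iff a.V \<noteq> 0.\<close>
definition chart_val :: "complex^'n \<Rightarrow> complex^'n \<Rightarrow> complex" where
  "chart_val a V = (\<Sum>i\<in>UNIV. a $ i * V $ i)"

definition in_chart :: "complex^'n \<Rightarrow> complex^'n \<Rightarrow> bool" where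
  "in_chart a V \<longleftrightarrow> chart_val a V \<noteq> 0"

definition chart_pt :: "complex^'n \<Rightarrow> complex^'n \<Rightarrow> complex^'n" where
  "chart_pt a V = (1 / chart_val a V) *s V"

definition seg_ratio :: "complex^'n \<Rightarrow> complex^'n \<Rightarrow> complex^'n \<Rightarrow> complex" where
  "seg_ratio P Q R = (THE t. P - Q = t *s (Q - R))"

definition multi_ratio ::
  "complex^'n \<Rightarrow> complex^'n \<Rightarrow> complex^'n \<Rightarrow> complex^'n \<Rightarrow> complex^'n \<Rightarrow> complex^'n \<Rightarrow> complex^'n \<Rightarrow> complex" where
  "multi_ratio a V1 V12 V2 V23 V3 V31 =
     seg_ratio (chart_pt a V1) (chart_pt a V12) (chart_pt a V2) *
     seg_ratio (chart_pt a V2) (chart_pt a V23) (chart_pt a V3) *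
     seg_ratio (chart_pt a V3) (chart_pt a V31) (chart_pt a V1)"

end

theory Submission
  imports Defs
begin

text \<open>If lifts satisfy \<open>Q = x P + y R\<close> and \<open>\<lambda>\<close> is the chart functional, then in the
  chart \<open>(P - Q)/(Q - R) = y \<lambda>(R) / (x \<lambda>(P))\<close>. Writing \<open>W = \<alpha>1 V1 - \<alpha>4 V4 = \<alpha>3 V3 - \<alpha>2 V2\<close>
  for the lift of the new point, the three triangles of the multi-ratio come from
  \<open>V0 = \<alpha>1 V1 + \<alpha>2 V2\<close>, \<open>\<alpha>3 V3 = \<alpha>2 V2 + W\<close> and \<open>-\<alpha>4 V4 = W - \<alpha>1 V1\<close>; all the factors
  \<open>\<alpha>i\<close> and \<open>\<lambda>(Vi)\<close> cancel, and the sign of the last relation leaves \<open>-1\<close>.\<close>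

lemma proj_eq_commute: "proj_eq u v \<longleftrightarrow> proj_eq v u"
proof -
  have "proj_eq v u" if "proj_eq u v" for u v :: "complex^'n"
  proof -
    from that obtain c where "c \<noteq> 0" "u = c *s v" unfolding proj_eq_def by blast
    then have "v = (1 / c) *s u" by (simp add: vector_smult_assoc)
    with \<open>c \<noteq> 0\<close> show ?thesis unfolding proj_eq_def by (intro exI[of _ "1 / c"]) simp
  qed
  then show ?thesis by blast
qed

lemma not_proj_eq_lincomb:
  assumes "\<not> proj_eq Q R" "Q \<noteq> 0" "Q = x *s P + y *s R"
  shows "\<not> proj_eq P R"
proof
  assume "proj_eq P R"
  then obtain c where "P = c *s R" unfolding proj_eq_def by blast
  with assms(3) have "Q = (x * c + y) *s R"
    by (simp add: vector_smult_assoc vector_sadd_rdistrib)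
  moreover from this assms(2) have "x * c + y \<noteq> 0" by (metis vector_smult_lzero)
  ultimately show False using assms(1) unfolding proj_eq_def by blast
qed

lemma lincomb_coeff_nonzero:
  assumes "V = s *s P + t *s R" "V \<noteq> 0" "\<not> proj_eq V R"
  shows "s \<noteq> 0"
proof
  assume "s = 0"
  with assms(1) have "V = t *s R" by simp
  with assms(2,3) show False unfolding proj_eq_def by fastforce
qed

lemma chart_val_lincomb:
  "chart_val a (x *s U + y *s V) = x * chart_val a U + y * chart_val a V"
  unfolding chart_val_def by (simp add: sum_distrib_left sum.distrib algebra_simps)

lemma chart_val_smult_chart_pt: "in_chart a V \<Longrightarrow> V = chart_val a V *s chart_pt a V"
  unfolding in_chart_def chart_pt_def by (simp add: vector_smult_assoc)

lemma proj_eq_if_chart_pt_eq: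
  assumes "in_chart a U" "in_chart a V" "chart_pt a U = chart_pt a V"
  shows "proj_eq U V"
proof -
  have "U = chart_val a U *s chart_pt a V"
    using chart_val_smult_chart_pt[OF assms(1)] assms(3) by simp
  also have "\<dots> = (chart_val a U / chart_val a V) *s V"
    using assms(2) unfolding in_chart_def chart_pt_def by (simp add: vector_smult_assoc)
  finally have "U = (chart_val a U / chart_val a V) *s V" .
  moreover have "chart_val a U / chart_val a V \<noteq> 0"
    using assms(1,2) unfolding in_chart_def by simp
  ultimately show ?thesis unfolding proj_eq_def by blast
qed

lemma seg_ratio_affine_combination:
  assumes "p \<noteq> r" "s \<noteq> 0"
  shows "seg_ratio p (s *s p + (1 - s) *s r) r = (1 - s) / s"
  unfolding seg_ratio_def
proof (rule the_equality)
  let ?q = "s *s p + (1 - s) *s r"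
  have p_minus_q: "p - ?q = (1 - s) *s (p - r)" and q_minus_r: "?q - r = s *s (p - r)"
    by (simp_all add: vec_eq_iff algebra_simps)
  then show "p - ?q = ((1 - s) / s) *s (?q - r)"
    using assms(2) by (simp add: vector_smult_assoc)
  fix t assume "p - ?q = t *s (?q - r)"
  then have "(1 - s) *s (p - r) = (t * s) *s (p - r)"
    unfolding p_minus_q q_minus_r by (simp add: vector_smult_assoc)
  with assms show "t = (1 - s) / s"
    by (metis eq_iff_diff_eq_0 nonzero_eq_divide_eq vector_mul_rcancel)
qed

lemma seg_ratio_chart_pt_lincomb:
  assumes Q: "VQ = x *s VP + y *s VR"
    and chart: "in_chart a VP" "in_chart a VQ" "in_chart a VR"
    and "x \<noteq> 0" "\<not> proj_eq VP VR"
  shows "seg_ratio (chart_pt a VP) (chart_pt a VQ) (chart_pt a VR)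
         = y * chart_val a VR / (x * chart_val a VP)"
proof -
  define s where "s = x * chart_val a VP / chart_val a VQ"
  have lQ: "chart_val a VQ = x * chart_val a VP + y * chart_val a VR"
    unfolding Q by (rule chart_val_lincomb)
  have one_minus_s: "1 - s = y * chart_val a VR / chart_val a VQ"
    using chart(2) unfolding s_def lQ in_chart_def by (simp add: field_simps)
  have q_eq: "chart_pt a VQ = s *s chart_pt a VP + (1 - s) *s chart_pt a VR"
  proof -
    have "chart_pt a VQ = (1 / chart_val a VQ) *s
        (x *s (chart_val a VP *s chart_pt a VP) + y *s (chart_val a VR *s chart_pt a VR))"
      using Q chart_val_smult_chart_pt[OF chart(1)] chart_val_smult_chart_pt[OF chart(3)]
      by (simp add: chart_pt_def)
    then show ?thesis
      unfolding one_minus_s by (simp add: s_def vec_eq_iff algebra_simps)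
  qed
  have "chart_pt a VP \<noteq> chart_pt a VR"
    using proj_eq_if_chart_pt_eq chart assms(6) by blast
  moreover have "s \<noteq> 0"
    using assms(5) chart unfolding s_def in_chart_def by simp
  ultimately have "seg_ratio (chart_pt a VP) (chart_pt a VQ) (chart_pt a VR) = (1 - s) / s"
    unfolding q_eq by (rule seg_ratio_affine_combination)
  also have "\<dots> = y * chart_val a VR / (x * chart_val a VP)"
    unfolding one_minus_s using chart(2) unfolding in_chart_def by (simp add: s_def)
  finally show ?thesis .
qed

theorem proposition5p5:
  fixes V0 V1 V2 V3 V4 a :: "complex^'n" and \<alpha>1 \<alpha>2 \<alpha>3 \<alpha>4 :: complex
  assumes lifts: "V0 \<noteq> 0" "V1 \<noteq> 0" "V2 \<noteq> 0" "V3 \<noteq> 0" "V4 \<noteq> 0"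
    and tcd_b: "\<not> proj_eq V0 V1" "\<not> proj_eq V0 V2" "\<not> proj_eq V1 V2"
    and tcd_b': "\<not> proj_eq V0 V3" "\<not> proj_eq V0 V4" "\<not> proj_eq V3 V4"
    and rel_b: "V0 = \<alpha>1 *s V1 + \<alpha>2 *s V2"
    and rel_b': "V0 = \<alpha>3 *s V3 + \<alpha>4 *s V4"
    and defined: "\<not> proj_eq V1 V4" "\<not> proj_eq V2 V3"
    and chart: "in_chart a V1" "in_chart a V0" "in_chart a V2" "in_chart a V3"
      "in_chart a (\<alpha>1 *s V1 - \<alpha>4 *s V4)" "in_chart a V4"
  shows "multi_ratio a V1 V0 V2 V3 (\<alpha>1 *s V1 - \<alpha>4 *s V4) V4 = -1"
proof -
  define W where "W = \<alpha>1 *s V1 - \<alpha>4 *s V4"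
  have \<alpha>_nonzero: "\<alpha>1 \<noteq> 0" "\<alpha>2 \<noteq> 0" "\<alpha>3 \<noteq> 0" "\<alpha>4 \<noteq> 0"
    using lincomb_coeff_nonzero[OF rel_b lifts(1) tcd_b(2)]
      lincomb_coeff_nonzero[of V0 \<alpha>2 V2 \<alpha>1 V1] rel_b tcd_b(1)
      lincomb_coeff_nonzero[OF rel_b' lifts(1) tcd_b'(2)]
      lincomb_coeff_nonzero[of V0 \<alpha>4 V4 \<alpha>3 V3] rel_b' tcd_b'(1) lifts(1)
    by (simp_all add: add.commute)
  have V3_eq: "V3 = (\<alpha>2 / \<alpha>3) *s V2 + (1 / \<alpha>3) *s W"
    and V4_eq: "V4 = (- 1 / \<alpha>4) *s W + (\<alpha>1 / \<alpha>4) *s V1"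
  proof -
    have "W = \<alpha>3 *s V3 - \<alpha>2 *s V2"
      using rel_b rel_b' unfolding W_def by (simp add: vec_eq_iff algebra_simps)
    with \<alpha>_nonzero show "V3 = (\<alpha>2 / \<alpha>3) *s V2 + (1 / \<alpha>3) *s W"
      and "V4 = (- 1 / \<alpha>4) *s W + (\<alpha>1 / \<alpha>4) *s V1"
      unfolding W_def by (simp_all add: vec_eq_iff field_simps)
  qed
  have "\<not> proj_eq V2 W"
    using not_proj_eq_lincomb[of V3 V2 "1 / \<alpha>3" W "\<alpha>2 / \<alpha>3"] V3_eq lifts(4) defined(2)
    by (simp add: proj_eq_commute add.commute)
  moreover have "\<not> proj_eq W V1"
    using not_proj_eq_lincomb[OF _ lifts(5) V4_eq] defined(1) by (simp add: proj_eq_commute)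
  ultimately have ratios:
      "seg_ratio (chart_pt a V1) (chart_pt a V0) (chart_pt a V2)
        = \<alpha>2 * chart_val a V2 / (\<alpha>1 * chart_val a V1)"
      "seg_ratio (chart_pt a V2) (chart_pt a V3) (chart_pt a W)
        = chart_val a W / (\<alpha>2 * chart_val a V2)"
      "seg_ratio (chart_pt a W) (chart_pt a V4) (chart_pt a V1)
        = - \<alpha>1 * chart_val a V1 / chart_val a W"
    using seg_ratio_chart_pt_lincomb[OF rel_b chart(1,2,3) \<alpha>_nonzero(1) tcd_b(3)]
      seg_ratio_chart_pt_lincomb[OF V3_eq chart(3,4) chart(5)[folded W_def]]
      seg_ratio_chart_pt_lincomb[OF V4_eq chart(5)[folded W_def] chart(6,1)]
      \<alpha>_nonzero
    by simp_all
  with \<alpha>_nonzero chart(1,3,5) show ?thesis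
    unfolding multi_ratio_def W_def[symmetric] ratios in_chart_def by (simp add: field_simps)
qed

end
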